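(* For integers $1\le r<n$, $$\mathrm{LE}(n)\cap\left(\frac{n!}{r+1},\,n!\right]=\left\{\frac{n!}{r!}\,\ell:\ \ell\in \mathrm{LE}(r)\cap\left(\frac{r!}{r+1},\,r!\right]\right\}.$$
   Context: All posets are finite. For a finite poset $P$, $\mathrm{ext}(P)$ denotes the number of linear extensions of $P$. For a positive integer $n$, $\mathrm{LE}(n)=\{\mathrm{ext}(P): P \text{ a poset with } |P|=n\}$. *)

theory Defs
  imports Complex_Main
begin

definition is_poset :: "'a set \<Rightarrow> 'a rel \<Rightarrow> bool" where
  "is_poset A R \<longleftrightarrow> finite A \<and> R \<subseteq> A \<times> A \<and> partial_order_on A R"

definition ext :: "'a set \<Rightarrow> 'a rel \<Rightarrow> nat" where
  "ext A R = card {L. linear_order_on A L \<and> L \<subseteq> A \<times> A \<and> R \<subseteq> L}"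

text \<open>Every n-element poset is isomorphic to one on {0..<n}.\<close>
definition LE :: "nat \<Rightarrow> nat set" where
  "LE n = {ext {0..<n} R | R. is_poset {0..<n} R}"

end

(*
  Let P be a poset on n elements of which m are comparable to some other element. The
  remaining n - m elements are free, so e(P) = n!/m! * e(P|M) for the set M of the m
  non-isolated elements, and a poset without isolated elements satisfies e <= m!/m: either
  some element can be deleted without isolating anything, and it has at most m - 1 admissible
  positions, or the poset splits off a comparable pair. Hence e(P) <= n!/m, so e(P) > n!/(r+1)
  forces m <= r; enlarging M by isolated elements to an r-set S gives e(P) = n!/r! * e(P|S).
  Conversely, adjoining n - r isolated elements to an r-element poset multiplies e by n!/r!.
*)

theory Submission
  imports Defs "HOL-Combinatorics.Multiset_Permutations"
begin

section \<open>Linear extensions as lists\<close>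

definition is_linext :: "'a rel \<Rightarrow> 'a list \<Rightarrow> bool" where
  "is_linext R xs \<longleftrightarrow> sorted_wrt (\<lambda>a b. (b, a) \<notin> R) xs"

text \<open>A linear extension of \<open>R\<close> on \<open>A\<close> is represented by the list of \<open>A\<close> in increasing
  order; \<open>ext_eq_num_linexts\<close> identifies the two counts.\<close>

definition linexts :: "'a rel \<Rightarrow> 'a set \<Rightarrow> 'a list set" where
  "linexts R A = {xs \<in> permutations_of_set A. is_linext R xs}"

definition num_linexts :: "'a rel \<Rightarrow> 'a set \<Rightarrow> nat" where
  "num_linexts R A = card (linexts R A)"

lemma is_linext_Nil [simp]: "is_linext R []"
  by (simp add: is_linext_def)

lemma is_linext_Cons [simp]:
  "is_linext R (x # xs) \<longleftrightarrow> (\<forall>b\<in>set xs. (b, x) \<notin> R) \<and> is_linext R xs"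
  by (auto simp: is_linext_def)

lemma is_linext_filter: "is_linext R xs \<Longrightarrow> is_linext R (filter P xs)"
  unfolding is_linext_def by (rule sorted_wrt_filter)

lemma is_linext_map:
  assumes "\<And>a b. a \<in> set xs \<Longrightarrow> b \<in> set xs \<Longrightarrow> (g a, g b) \<in> R \<longleftrightarrow> (a, b) \<in> Q"
  shows "is_linext R (map g xs) \<longleftrightarrow> is_linext Q xs"
  using assms by (induction xs) auto

lemma finite_linexts [simp]: "finite (linexts R A)"
  by (simp add: linexts_def)

lemma mem_linexts_iff:
  "xs \<in> linexts R A \<longleftrightarrow> distinct xs \<and> set xs = A \<and> is_linext R xs"
  by (auto simp: linexts_def permutations_of_set_def)

lemma num_linexts_cong:
  assumes "\<And>a b. a \<in> A \<Longrightarrow> b \<in> A \<Longrightarrow> (a, b) \<in> R \<longleftrightarrow> (a, b) \<in> Q"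
  shows "num_linexts R A = num_linexts Q A"
proof -
  have "linexts R A = linexts Q A"
    using is_linext_map[of _ id R Q] assms by (auto simp: mem_linexts_iff)
  then show ?thesis by (simp add: num_linexts_def)
qed

lemma num_linexts_bij_betw:
  assumes g: "bij_betw g X Y"
      and rel: "\<And>a b. a \<in> X \<Longrightarrow> b \<in> X \<Longrightarrow> (g a, g b) \<in> R \<longleftrightarrow> (a, b) \<in> Q"
  shows "num_linexts R Y = num_linexts Q X"
proof -
  have inj: "inj_on g X" and Y: "Y = g ` X" using g by (auto simp: bij_betw_def)
  have "linexts R Y = map g ` linexts Q X"
    using permutations_of_set_image_inj[OF inj] is_linext_map[of _ g R Q] rel
    by (auto simp: Y linexts_def permutations_of_set_def)
  moreover have "inj_on (map g) (linexts Q X)"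
    using inj by (auto intro!: inj_onI simp: mem_linexts_iff inj_on_map_eq_map)
  ultimately show ?thesis by (simp add: num_linexts_def card_image)
qed

lemma num_linexts_empty [simp]: "num_linexts R {} = 1"
proof -
  have "linexts R {} = {[]}" by (auto simp: linexts_def)
  then show ?thesis by (simp add: num_linexts_def)
qed

lemma num_linexts_antichain:
  assumes "finite A" and "\<And>a b. a \<in> A \<Longrightarrow> b \<in> A \<Longrightarrow> (a, b) \<in> R \<Longrightarrow> a = b"
  shows "num_linexts R A = fact (card A)"
proof -
  have "is_linext R xs" if "distinct xs" "set xs = A" for xs
    unfolding is_linext_def sorted_wrt_iff_nth_less
  proof (intro allI impI notI)
    fix i j assume ij: "i < j" "j < length xs" and ji: "(xs ! j, xs ! i) \<in> R"
    have "xs ! i \<in> A" "xs ! j \<in> A" using that ij by auto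
    with ji have "xs ! j = xs ! i" using assms(2) by blast
    then show False using that(1) ij nth_eq_iff_index_eq by fastforce
  qed
  then have "linexts R A = permutations_of_set A"
    by (auto simp: linexts_def permutations_of_set_def)
  then show ?thesis using assms(1) by (simp add: num_linexts_def)
qed

lemma num_linexts_comparable_pair:
  assumes "x \<noteq> y" and "(x, y) \<in> R \<or> (y, x) \<in> R"
  shows "num_linexts R {x, y} \<le> 1"
proof -
  have sub: "linexts R {x, y} \<subseteq> {[x, y], [y, x]}"
    using permutations_of_set_doubleton[OF assms(1)] by (auto simp: linexts_def)
  have "\<not> (is_linext R [x, y] \<and> is_linext R [y, x])"
    using assms(2) by (simp add: disj_commute)
  then have "linexts R {x, y} \<subseteq> {[x, y]} \<or> linexts R {x, y} \<subseteq> {[y, x]}"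
    using sub mem_linexts_iff[THEN iffD1] by blast
  then show ?thesis
    unfolding num_linexts_def using card_mono[of "{_}"] by fastforce
qed

fun list_order :: "'a list \<Rightarrow> 'a rel" where
  "list_order [] = {}"
| "list_order (x # xs) = {x} \<times> set (x # xs) \<union> list_order xs"

lemma list_order_subset: "list_order xs \<subseteq> set xs \<times> set xs"
  by (induction xs) auto

lemma list_order_diag_iff: "(a, a) \<in> list_order xs \<longleftrightarrow> a \<in> set xs"
  by (induction xs) auto

lemma linear_order_on_list_order:
  assumes "distinct xs"
  shows "linear_order_on (set xs) (list_order xs)"
  using assms
proof (induction xs)
  case Nil
  then show ?case by simp
next
  case (Cons x xs)
  have sub: "list_order xs \<subseteq> set xs \<times> set xs" and "x \<notin> set xs"
    using list_order_subset Cons.prems by auto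
  with Cons.IH Cons.prems show ?case
    unfolding order_on_defs refl_on_def total_on_def antisym_def trans_def
    by (auto 4 3)
qed

lemma is_linext_iff_subset_list_order:
  assumes "distinct xs"
  shows "is_linext R xs \<longleftrightarrow> R \<inter> (set xs \<times> set xs) \<subseteq> list_order xs"
  using assms
proof (induction xs)
  case Nil
  then show ?case by simp
next
  case (Cons x xs)
  have "x \<notin> set xs" and "list_order xs \<subseteq> set xs \<times> set xs"
    using list_order_subset Cons.prems by auto
  with Cons show ?case by auto
qed

lemma list_order_inj:
  assumes "distinct xs" and "distinct ys" and "list_order xs = list_order ys"
  shows "xs = ys"
  using assms
proof (induction xs arbitrary: ys)
  case Nil
  then have "\<forall>a. a \<notin> set ys" using list_order_diag_iff[of _ ys] by simp
  then show ?case by simp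
next
  case (Cons x xs)
  note eq = \<open>list_order (x # xs) = list_order ys\<close>
  have set_eq: "set ys = set (x # xs)"
    using list_order_diag_iff[of _ ys] list_order_diag_iff[of _ "x # xs"] unfolding eq by blast
  then obtain y ys' where ys: "ys = y # ys'" by (cases ys) auto
  have "y \<in> set (x # xs)" using set_eq ys by auto
  then have "(x, y) \<in> list_order ys" unfolding eq[symmetric] by auto
  moreover have "(y, x) \<in> list_order ys"
    using set_eq ys by simp
  ultimately have "x = y"
    using linear_order_on_list_order[OF Cons.prems(2)] by (auto simp: order_on_defs dest: antisymD)
  have "list_order xs = list_order (x # xs) - {x} \<times> UNIV"
    using list_order_subset[of xs] Cons.prems(1) by auto
  also have "\<dots> = list_order ys'"
    unfolding eq using list_order_subset[of ys'] Cons.prems(2) ys \<open>x = y\<close> by auto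
  finally show ?case using Cons.IH Cons.prems(1,2) ys \<open>x = y\<close> by simp
qed

lemma linear_order_on_least:
  assumes "linear_order_on A L" and "finite A" and "A \<noteq> {}"
  obtains m where "m \<in> A" and "\<And>a. a \<in> A \<Longrightarrow> (m, a) \<in> L"
proof -
  have "L \<subseteq> A \<times> A" using assms(1) by (auto simp: order_on_defs)
  then have "finite L" using assms(2) finite_subset by blast
  then have "wf (L - Id)"
    using assms(1) partial_order_on_well_order_on by (auto simp: linear_order_on_def)
  then obtain m where m: "m \<in> A" "\<And>a. (a, m) \<in> L - Id \<Longrightarrow> a \<notin> A"
    using assms(3) wfE_min by (metis ex_in_conv)
  have "(m, a) \<in> L" if "a \<in> A" for a
  proof (cases "a = m")
    case True
    then show ?thesis using that assms(1) by (auto simp: order_on_defs refl_on_def)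
  next
    case False
    then have "(m, a) \<in> L \<or> (a, m) \<in> L"
      using that m(1) assms(1) by (auto simp: order_on_defs total_on_def)
    then show ?thesis using m(2)[of a] False that by blast
  qed
  with m(1) show ?thesis using that by blast
qed

lemma linear_order_on_eq_list_order:
  assumes "finite A" and "linear_order_on A L"
  obtains xs where "distinct xs" and "set xs = A" and "list_order xs = L"
  using assms
proof (induction A arbitrary: L thesis rule: finite_psubset_induct)
  case (psubset A)
  note that = psubset.prems(1) and lin = psubset.prems(2)
  have LA: "L \<subseteq> A \<times> A" using lin by (auto simp: order_on_defs)
  show ?case
  proof (cases "A = {}")
    case True
    then show ?thesis using LA that[of "[]"] by simp
  next
    case False
    obtain m where m: "m \<in> A" "\<And>a. a \<in> A \<Longrightarrow> (m, a) \<in> L"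
      using linear_order_on_least[OF lin psubset.hyps(1) False] by blast
    let ?A' = "A - {m}"
    have "linear_order_on ?A' (L \<inter> ?A' \<times> ?A')"
      using lin unfolding order_on_defs refl_on_def total_on_def antisym_def trans_def by blast
    then obtain ys where ys: "distinct ys" "set ys = ?A'" "list_order ys = L \<inter> ?A' \<times> ?A'"
      using psubset.IH[of ?A'] m(1) by blast
    have "(a, b) \<in> list_order (m # ys) \<longleftrightarrow> (a, b) \<in> L" for a b
    proof (cases "a = m")
      case True
      then show ?thesis using m LA ys list_order_subset[of ys] by auto
    next
      case False
      have "b \<noteq> m" if "(a, b) \<in> L"
        using that False m lin LA unfolding order_on_defs antisym_def by blast
      then show ?thesis using False ys LA by auto
    qed
    then have "list_order (m # ys) = L" by auto
    moreover have "distinct (m # ys)" and "set (m # ys) = A" using ys m(1) by auto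
    ultimately show ?thesis using that by blast
  qed
qed

theorem ext_eq_num_linexts:
  assumes "finite A" and "R \<subseteq> A \<times> A"
  shows "ext A R = num_linexts R A"
proof -
  have "bij_betw list_order (linexts R A) {L. linear_order_on A L \<and> L \<subseteq> A \<times> A \<and> R \<subseteq> L}"
  proof (rule bij_betw_imageI)
    show "inj_on list_order (linexts R A)"
      by (auto intro!: inj_onI list_order_inj simp: mem_linexts_iff)
    show "list_order ` linexts R A = {L. linear_order_on A L \<and> L \<subseteq> A \<times> A \<and> R \<subseteq> L}"
    proof (intro equalityI subsetI)
      fix L assume "L \<in> list_order ` linexts R A"
      then obtain xs where "distinct xs" "set xs = A" "is_linext R xs" "L = list_order xs"
        by (auto simp: mem_linexts_iff)
      then show "L \<in> {L. linear_order_on A L \<and> L \<subseteq> A \<times> A \<and> R \<subseteq> L}"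
        using linear_order_on_list_order list_order_subset is_linext_iff_subset_list_order assms(2)
        by fastforce
    next
      fix L assume "L \<in> {L. linear_order_on A L \<and> L \<subseteq> A \<times> A \<and> R \<subseteq> L}"
      then have L: "linear_order_on A L" "R \<subseteq> L" by auto
      obtain xs where "distinct xs" "set xs = A" "list_order xs = L"
        using linear_order_on_eq_list_order[OF assms(1) L(1)] .
      then show "L \<in> list_order ` linexts R A"
        using L(2) is_linext_iff_subset_list_order by (fastforce simp: mem_linexts_iff)
    qed
  qed
  then show ?thesis by (simp add: ext_def num_linexts_def bij_betw_same_card)
qed

section \<open>Counting linear extensions by shuffles\<close>

text \<open>Every ordering of \<open>A\<close> is the unique shuffle of its restrictions to \<open>P\<close> and to the
  complement of \<open>P\<close>.\<close>

lemma num_linexts_eq_sum_shuffles: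
  assumes "finite A"
  shows "num_linexts R A =
    (\<Sum>(u, v) \<in> linexts R {a\<in>A. P a} \<times> linexts R {a\<in>A. \<not> P a}. card (shuffles u v \<inter> Collect (is_linext R)))"
proof -
  let ?U = "linexts R {a\<in>A. P a}" and ?V = "linexts R {a\<in>A. \<not> P a}"
  let ?W = "\<lambda>(u, v). shuffles u v \<inter> Collect (is_linext R)"
  have shuffles_eq: "shuffles u v = partition P -` {(u, v)}" if "(u, v) \<in> ?U \<times> ?V" for u v
    using that by (intro inv_image_partition[symmetric]) (auto simp: mem_linexts_iff)
  have "linexts R A = (\<Union>p \<in> ?U \<times> ?V. ?W p)"
  proof (intro equalityI subsetI)
    fix xs assume "xs \<in> linexts R A"
    then have "distinct xs" "set xs = A" "is_linext R xs" by (auto simp: mem_linexts_iff)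
    moreover have "xs \<in> shuffles (filter P xs) (filter (\<lambda>a. \<not> P a) xs)"
      by (rule partition_in_shuffles)
    ultimately have "(filter P xs, filter (\<lambda>a. \<not> P a) xs) \<in> ?U \<times> ?V"
      and "xs \<in> ?W (filter P xs, filter (\<lambda>a. \<not> P a) xs)"
      by (auto simp: mem_linexts_iff is_linext_filter)
    then show "xs \<in> (\<Union>p \<in> ?U \<times> ?V. ?W p)" by (rule UN_I)
  next
    fix xs assume "xs \<in> (\<Union>p \<in> ?U \<times> ?V. ?W p)"
    then obtain u v where uv: "u \<in> ?U" "v \<in> ?V" "xs \<in> shuffles u v" "is_linext R xs" by auto
    then have "distinct xs"
      by (intro distinct_disjoint_shuffles[of u v xs]) (auto simp: mem_linexts_iff)
    moreover have "set xs = A" using set_shuffles[OF uv(3)] uv(1,2) by (auto simp: mem_linexts_iff)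
    ultimately show "xs \<in> linexts R A" using uv(4) by (simp add: mem_linexts_iff)
  qed
  moreover have "?W p \<inter> ?W q = {}" if "p \<in> ?U \<times> ?V" "q \<in> ?U \<times> ?V" "p \<noteq> q" for p q
  proof -
    have sub: "?W p \<subseteq> partition P -` {p}" if "p \<in> ?U \<times> ?V" for p
      using that shuffles_eq by (cases p) simp
    have "?W p \<inter> ?W q \<subseteq> partition P -` {p} \<inter> partition P -` {q}"
      using sub[OF that(1)] sub[OF that(2)] by (rule Int_mono)
    also have "\<dots> = {}" using that(3) by auto
    finally show ?thesis by blast
  qed
  ultimately have "card (linexts R A) = (\<Sum>p \<in> ?U \<times> ?V. card (?W p))"
    by (simp add: card_UN_disjoint)
  then show ?thesis by (simp add: num_linexts_def split_def)
qed

lemma is_linext_shuffles: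
  assumes "zs \<in> shuffles u v" and "is_linext R u" and "is_linext R v"
      and "\<And>a b. a \<in> set u \<Longrightarrow> b \<in> set v \<Longrightarrow> (a, b) \<notin> R \<and> (b, a) \<notin> R"
  shows "is_linext R zs"
  using assms
proof (induction u v arbitrary: zs rule: shuffles.induct)
  case (3 x xs y ys)
  from "3.prems"(1) consider zs' where "zs = x # zs'" "zs' \<in> shuffles xs (y # ys)"
    | zs' where "zs = y # zs'" "zs' \<in> shuffles (x # xs) ys"
    by auto
  then show ?case
  proof cases
    case 1
    then show ?thesis using "3.IH"(1) "3.prems"(2-4) set_shuffles[OF 1(2)] by auto
  next
    case 2
    then show ?thesis using "3.IH"(2) "3.prems"(2-4) set_shuffles[OF 2(2)] by auto
  qed
qed simp_all

lemma num_linexts_disconnected: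
  assumes "finite A"
      and no_cross: "\<And>a b. (a, b) \<in> R \<Longrightarrow> a \<in> A \<Longrightarrow> b \<in> A \<Longrightarrow> P a \<longleftrightarrow> P b"
  shows "num_linexts R A =
    (card A choose card {a\<in>A. P a}) * num_linexts R {a\<in>A. P a} * num_linexts R {a\<in>A. \<not> P a}"
proof -
  let ?U = "linexts R {a\<in>A. P a}" and ?V = "linexts R {a\<in>A. \<not> P a}"
  have card_A: "card A = card {a\<in>A. P a} + card {a\<in>A. \<not> P a}"
    using assms(1) by (subst card_Un_disjoint[symmetric]) (auto intro: arg_cong[where f = card])
  have "card (shuffles u v \<inter> Collect (is_linext R)) = card A choose card {a\<in>A. P a}"
    if "(u, v) \<in> ?U \<times> ?V" for u v
  proof -
    have u: "distinct u" "set u = {a\<in>A. P a}" "is_linext R u"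
      and v: "distinct v" "set v = {a\<in>A. \<not> P a}" "is_linext R v"
      using that by (auto simp: mem_linexts_iff)
    have "shuffles u v \<inter> Collect (is_linext R) = shuffles u v"
      using is_linext_shuffles[OF _ u(3) v(3)] no_cross u(2) v(2) by blast
    moreover have "length u = card {a\<in>A. P a}" "length v = card {a\<in>A. \<not> P a}"
      using u v distinct_card by metis+
    ultimately show ?thesis
      using card_disjoint_shuffles[of u v] u(2) v(2) card_A by auto
  qed
  then have "num_linexts R A = (\<Sum>(u, v) \<in> ?U \<times> ?V. card A choose card {a\<in>A. P a})"
    unfolding num_linexts_eq_sum_shuffles[OF assms(1), of R P] by (intro sum.cong) auto
  then show ?thesis by (simp add: num_linexts_def card_cartesian_product)
qed

text \<open>Of the \<open>length u + 1\<close> ways to insert \<open>x\<close> into \<open>u\<close>, putting it first or last violates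
  the relation between \<open>x\<close> and \<open>y\<close>.\<close>

lemma card_linext_shuffles_singleton_le:
  assumes "distinct u" and "x \<notin> set u" and "y \<in> set u" and "(x, y) \<in> R \<or> (y, x) \<in> R"
  shows "card (shuffles u [x] \<inter> Collect (is_linext R)) \<le> length u"
proof -
  obtain bad where bad: "bad \<in> shuffles u [x]" "\<not> is_linext R bad"
  proof (cases "(y, x) \<in> R")
    case True
    have "x # u \<in> shuffles u [x]" using Cons_in_shuffles_rightI[of u u "[]" x] by simp
    moreover have "\<not> is_linext R (x # u)" using True assms(3) by auto
    ultimately show ?thesis using that by blast
  next
    case False
    have "u @ [x] \<in> shuffles u [x]"
      by (induction u) (auto intro: Cons_in_shuffles_leftI)
    moreover have "\<not> is_linext R (u @ [x])"
      using False assms(3,4) by (auto simp: is_linext_def sorted_wrt_append)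
    ultimately show ?thesis using that by blast
  qed
  have "shuffles u [x] \<inter> Collect (is_linext R) \<subseteq> shuffles u [x] - {bad}"
    using bad(2) by auto
  then have "card (shuffles u [x] \<inter> Collect (is_linext R)) \<le> card (shuffles u [x] - {bad})"
    by (intro card_mono) auto
  also have "\<dots> = length u"
    using bad(1) card_disjoint_shuffles[of u "[x]"] assms(2) by simp
  finally show ?thesis .
qed

lemma num_linexts_remove_comparable:
  assumes "finite A" and "x \<in> A" and "y \<in> A" and "y \<noteq> x"
      and "(x, y) \<in> R \<or> (y, x) \<in> R"
  shows "num_linexts R A \<le> (card A - 1) * num_linexts R (A - {x})"
proof -
  let ?P = "\<lambda>a. a \<noteq> x"
  let ?U = "linexts R {a\<in>A. ?P a}" and ?V = "linexts R {a\<in>A. \<not> ?P a}"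
  have "{a\<in>A. ?P a} = A - {x}" and x_only: "{a\<in>A. \<not> ?P a} = {x}"
    using assms(2) by auto
  then have U: "?U = linexts R (A - {x})" by simp
  have V: "?V \<subseteq> {[x]}" unfolding x_only by (auto simp: linexts_def)
  have "card (shuffles u v \<inter> Collect (is_linext R)) \<le> card A - 1"
    if "(u, v) \<in> ?U \<times> ?V" for u v
  proof -
    have u: "distinct u" "set u = A - {x}" using that U by (auto simp: mem_linexts_iff)
    moreover have "length u = card A - 1"
      using distinct_card[OF u(1)] u(2) assms(1,2) by simp
    moreover have "v = [x]" using that V by auto
    ultimately show ?thesis
      using card_linext_shuffles_singleton_le[of u x y R] assms(3-5) by simp
  qed
  then have "num_linexts R A \<le> (\<Sum>(u, v) \<in> ?U \<times> ?V. card A - 1)"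
    unfolding num_linexts_eq_sum_shuffles[OF assms(1), of R ?P] by (intro sum_mono) auto
  also have "\<dots> = card ?U * card ?V * (card A - 1)"
    by (simp add: card_cartesian_product)
  also have "\<dots> \<le> card ?U * (card A - 1)"
    using card_mono[OF _ V] by simp
  finally show ?thesis by (simp add: U num_linexts_def mult.commute)
qed

lemma num_linexts_isolated_outside:
  assumes "finite A" and "S \<subseteq> A"
      and inside: "\<And>a b. (a, b) \<in> R \<Longrightarrow> a \<in> A \<Longrightarrow> b \<in> A \<Longrightarrow> a \<noteq> b \<Longrightarrow> a \<in> S \<and> b \<in> S"
  shows "num_linexts R A = (card A choose card S) * num_linexts R S * fact (card A - card S)"
proof -
  have "{a\<in>A. a \<in> S} = S" and "{a\<in>A. a \<notin> S} = A - S" using assms(2) by auto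
  moreover have "num_linexts R (A - S) = fact (card (A - S))"
    using assms(1) inside by (intro num_linexts_antichain) auto
  moreover have "card (A - S) = card A - card S"
    using assms(1,2) by (simp add: card_Diff_subset finite_subset)
  ultimately show ?thesis
    using num_linexts_disconnected[of A R "\<lambda>a. a \<in> S"] assms(1) inside by auto
qed

section \<open>Posets without isolated elements\<close>

definition neighbours :: "'a rel \<Rightarrow> 'a set \<Rightarrow> 'a \<Rightarrow> 'a set" where
  "neighbours R A z = {w \<in> A. w \<noteq> z \<and> ((z, w) \<in> R \<or> (w, z) \<in> R)}"

lemma neighbours_Diff: "neighbours R (A - B) z = neighbours R A z - B"
  by (auto simp: neighbours_def)

lemma neighbours_sym: "z \<in> A \<Longrightarrow> w \<in> neighbours R A z \<Longrightarrow> z \<in> neighbours R A w"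
  by (auto simp: neighbours_def)

lemma isolated_pair_if_no_removable:
  assumes no_isolated: "\<forall>z\<in>A. neighbours R A z \<noteq> {}" and x: "x \<in> A"
      and no_removable: "\<forall>v\<in>A. \<exists>z\<in>A - {v}. neighbours R (A - {v}) z = {}"
  obtains y where "neighbours R A x = {y}" and "neighbours R A y = {x}"
proof -
  have unique: "neighbours R A z = {v}" if "v \<in> A" "z \<in> A - {v}" "neighbours R (A - {v}) z = {}" for v z
    using that no_isolated by (auto simp: neighbours_Diff)
  obtain y where y: "y \<in> A - {x}" "neighbours R (A - {x}) y = {}"
    using no_removable x by blast
  note y = y(1) unique[OF x y]
  obtain z where z: "z \<in> A - {y}" "neighbours R (A - {y}) z = {}"
    using no_removable y(1) by blast
  have "neighbours R A z = {y}" using unique[of y z] y(1) z by simp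
  moreover have "z \<in> neighbours R A y" using neighbours_sym[of z A y R] z(1) calculation by simp
  ultimately have "neighbours R A x = {y}" using y(2) by simp
  then show ?thesis using that y(2) by blast
qed

lemma num_linexts_le_isolated_pair:
  assumes "finite A" and "x \<in> A"
      and "neighbours R A x = {y}" and "neighbours R A y = {x}"
  shows "num_linexts R A \<le> (card A choose 2) * num_linexts R (A - {x, y})"
proof -
  have y: "y \<in> A" "y \<noteq> x" "(x, y) \<in> R \<or> (y, x) \<in> R"
    using assms(3) by (auto simp: neighbours_def)
  have pair: "{a\<in>A. a \<in> {x, y}} = {x, y}" and rest: "{a\<in>A. a \<notin> {x, y}} = A - {x, y}"
    using assms(2) y(1) by auto
  have no_cross: "a \<in> {x, y} \<longleftrightarrow> b \<in> {x, y}" if "(a, b) \<in> R" "a \<in> A" "b \<in> A" for a b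
  proof (cases "a = b")
    case False
    then have "b \<in> neighbours R A a" and "a \<in> neighbours R A b"
      using that by (auto simp: neighbours_def)
    then show ?thesis using assms(3,4) by auto
  qed simp
  have "num_linexts R A = (card A choose 2) * num_linexts R {x, y} * num_linexts R (A - {x, y})"
    using num_linexts_disconnected[of A R "\<lambda>a. a \<in> {x, y}"] assms(1) no_cross pair rest y(2)
    by (simp add: numeral_2_eq_2)
  also have "\<dots> \<le> (card A choose 2) * num_linexts R (A - {x, y})"
    using num_linexts_comparable_pair[of x y R] y(2,3) by simp
  finally show ?thesis .
qed

lemma neighbours_Diff_isolated_pair:
  assumes "neighbours R A x = {y}" and "neighbours R A y = {x}" and "z \<in> A - {x, y}"
  shows "neighbours R (A - {x, y}) z = neighbours R A z"
proof -
  have "x \<notin> neighbours R A z" and "y \<notin> neighbours R A z"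
    using assms neighbours_sym[of z A _ R] by auto
  then show ?thesis by (auto simp: neighbours_Diff)
qed

lemma two_le_card_if_no_isolated:
  assumes "finite A" and "z \<in> A" and "neighbours R A z \<noteq> {}"
  shows "2 \<le> card A"
proof -
  obtain w where "w \<in> A" "w \<noteq> z" using assms(3) by (auto simp: neighbours_def)
  then have "card {z, w} \<le> card A" using assms(1,2) by (intro card_mono) auto
  with \<open>w \<noteq> z\<close> show ?thesis by simp
qed

lemma card_mult_num_linexts_le_fact_remove:
  assumes finite_A: "finite A" and x: "x \<in> A" and "neighbours R A x \<noteq> {}"
      and IH: "card (A - {x}) * num_linexts R (A - {x}) \<le> fact (card (A - {x}))"
  shows "card A * num_linexts R A \<le> fact (card A)"
proof -
  obtain y where "y \<in> neighbours R A x" using assms(3) by blast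
  then have y: "y \<in> A" "y \<noteq> x" "(x, y) \<in> R \<or> (y, x) \<in> R"
    by (auto simp: neighbours_def)
  have card_A: "card A = Suc (card (A - {x}))"
    using card_Suc_Diff1[OF finite_A x] by simp
  have "num_linexts R A \<le> card (A - {x}) * num_linexts R (A - {x})"
    using num_linexts_remove_comparable[OF finite_A x y] card_A by simp
  then have "card A * num_linexts R A \<le> card A * (card (A - {x}) * num_linexts R (A - {x}))"
    by (rule mult_le_mono2)
  also have "\<dots> \<le> card A * fact (card (A - {x}))"
    using IH by simp
  also have "\<dots> = fact (card A)"
    using card_A by simp
  finally show ?thesis .
qed

lemma card_mult_num_linexts_le_fact_pair:
  assumes finite_A: "finite A" and x: "x \<in> A"
      and xy: "neighbours R A x = {y}" "neighbours R A y = {x}"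
      and no_isolated: "\<forall>z\<in>A - {x, y}. neighbours R (A - {x, y}) z \<noteq> {}"
      and IH: "card (A - {x, y}) * num_linexts R (A - {x, y}) \<le> fact (card (A - {x, y}))"
  shows "card A * num_linexts R A \<le> fact (card A)"
proof -
  define B where "B = A - {x, y}"
  have y: "y \<in> A" "y \<noteq> x" using xy(1) by (auto simp: neighbours_def)
  have card_A: "card A = card B + 2"
    using card_Diff_subset[of "{x, y}" A] card_mono[of A "{x, y}"] finite_A x y
    unfolding B_def by simp
  have "card A * num_linexts R B \<le> 2 * fact (card B)"
  proof (cases "B = {}")
    case True
    then show ?thesis using card_A by simp
  next
    case False
    then obtain z where "z \<in> B" by blast
    then have "2 \<le> card B"
      using two_le_card_if_no_isolated[of B z R] finite_A no_isolated unfolding B_def by blast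
    then have "card A \<le> 2 * card B" using card_A by simp
    then have "card A * num_linexts R B \<le> 2 * (card B * num_linexts R B)"
      using mult_le_mono1 by (simp add: mult.assoc)
    then show ?thesis using IH unfolding B_def by linarith
  qed
  then have "(card A choose 2) * (card A * num_linexts R B) \<le> (card A choose 2) * (2 * fact (card B))"
    by (rule mult_le_mono2)
  moreover have "num_linexts R A \<le> (card A choose 2) * num_linexts R B"
    using num_linexts_le_isolated_pair[OF finite_A x xy] unfolding B_def .
  then have "card A * num_linexts R A \<le> (card A choose 2) * (card A * num_linexts R B)"
    using mult_le_mono2[of _ _ "card A"] by (simp add: algebra_simps)
  moreover have "(card A choose 2) * (2 * fact (card B)) = fact (card A)"
    using binomial_fact_lemma[of 2 "card A"] card_A by (simp add: algebra_simps)
  ultimately show ?thesis by linarith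
qed

theorem card_mult_num_linexts_le_fact:
  assumes "finite A" and "\<forall>z\<in>A. neighbours R A z \<noteq> {}"
  shows "card A * num_linexts R A \<le> fact (card A)"
  using assms
proof (induction "card A" arbitrary: A rule: less_induct)
  case less
  note finite_A = less.prems(1) and no_isolated = less.prems(2)
  show ?case
  proof (cases "\<exists>x\<in>A. \<forall>z\<in>A - {x}. neighbours R (A - {x}) z \<noteq> {}")
    case True
    then obtain x where x: "x \<in> A" "\<forall>z\<in>A - {x}. neighbours R (A - {x}) z \<noteq> {}"
      by blast
    have "card (A - {x}) < card A" using finite_A x(1) by (rule card_Diff1_less)
    then have "card (A - {x}) * num_linexts R (A - {x}) \<le> fact (card (A - {x}))"
      using less.hyps finite_A x(2) by simp
    then show ?thesis
      using card_mult_num_linexts_le_fact_remove[OF finite_A x(1)] x(1) no_isolated by blast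
  next
    case no_removable: False
    show ?thesis
    proof (cases "A = {}")
      case False
      then obtain x where x: "x \<in> A" by blast
      have "\<forall>v\<in>A. \<exists>z\<in>A - {v}. neighbours R (A - {v}) z = {}"
        using no_removable by blast
      then obtain y where xy: "neighbours R A x = {y}" "neighbours R A y = {x}"
        using isolated_pair_if_no_removable[OF no_isolated x] by blast
      have B: "finite (A - {x, y})" "\<forall>z\<in>A - {x, y}. neighbours R (A - {x, y}) z \<noteq> {}"
        using finite_A no_isolated neighbours_Diff_isolated_pair[OF xy] by auto
      have "card (A - {x, y}) < card A" using finite_A x by (intro psubset_card_mono) auto
      then have "card (A - {x, y}) * num_linexts R (A - {x, y}) \<le> fact (card (A - {x, y}))"
        using less.hyps B by simp
      then show ?thesis by (rule card_mult_num_linexts_le_fact_pair[OF finite_A x xy B(2)])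
    qed simp
  qed
qed

section \<open>The large values of \<open>LE\<close>\<close>

lemma num_linexts_in_LE:
  assumes "partial_order_on A P" and "S \<subseteq> A" and "finite S"
  shows "num_linexts P S \<in> LE (card S)"
proof -
  let ?k = "card S"
  obtain g where g: "bij_betw g {0..<?k} S"
    using ex_bij_betw_nat_finite[OF assms(3)] by blast
  then have g_S: "g i \<in> S" if "i < ?k" for i
    using that by (auto simp: bij_betw_def)
  define Q where "Q = {(i, j). i < ?k \<and> j < ?k \<and> (g i, g j) \<in> P}"
  have "is_poset {0..<?k} Q"
  proof -
    have "refl_on {0..<?k} Q"
      using assms(1,2) g_S by (fastforce simp: Q_def refl_on_def order_on_defs)
    moreover have "trans Q"
      using assms(1) by (auto simp: Q_def order_on_defs intro: transI dest: transD)
    moreover have "antisym Q"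
      using assms(1) bij_betw_imp_inj_on[OF g]
      by (auto simp: Q_def order_on_defs intro!: antisymI dest: antisymD inj_onD)
    ultimately show ?thesis by (auto simp: is_poset_def order_on_defs Q_def)
  qed
  moreover have "ext {0..<?k} Q = num_linexts P S"
  proof -
    have "ext {0..<?k} Q = num_linexts Q {0..<?k}"
      by (rule ext_eq_num_linexts) (auto simp: Q_def)
    also have "\<dots> = num_linexts P S"
      by (rule num_linexts_bij_betw[OF g, symmetric]) (auto simp: Q_def)
    finally show ?thesis .
  qed
  ultimately show ?thesis unfolding LE_def by force
qed

lemma related_in_nonisolated:
  assumes "(a, b) \<in> R" "a \<in> A" "b \<in> A" "a \<noteq> b"
  shows "a \<in> {z\<in>A. neighbours R A z \<noteq> {}}" and "b \<in> {z\<in>A. neighbours R A z \<noteq> {}}"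
  using assms by (auto simp: neighbours_def)

lemma neighbours_nonisolated:
  assumes "z \<in> A"
  shows "neighbours R {z\<in>A. neighbours R A z \<noteq> {}} z = neighbours R A z"
  using neighbours_sym[OF assms, of _ R] by (auto simp: neighbours_def)

theorem card_nonisolated_mult_num_linexts_le_fact:
  assumes "finite A"
  shows "card {z\<in>A. neighbours R A z \<noteq> {}} * num_linexts R A \<le> fact (card A)"
proof -
  define M where "M = {z\<in>A. neighbours R A z \<noteq> {}}"
  have M: "M \<subseteq> A" "finite M" using assms by (auto simp: M_def)
  have "\<forall>z\<in>M. neighbours R M z \<noteq> {}"
    using neighbours_nonisolated[of _ A R] by (simp add: M_def)
  then have "card M * num_linexts R M \<le> fact (card M)"
    using card_mult_num_linexts_le_fact[OF M(2)] by blast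
  have "a \<in> M \<and> b \<in> M" if "(a, b) \<in> R" "a \<in> A" "b \<in> A" "a \<noteq> b" for a b
    using related_in_nonisolated[OF that] unfolding M_def by blast
  then have "num_linexts R A = (card A choose card M) * num_linexts R M * fact (card A - card M)"
    by (rule num_linexts_isolated_outside[OF assms M(1)])
  then have "card M * num_linexts R A
      = (card A choose card M) * fact (card A - card M) * (card M * num_linexts R M)"
    by (simp add: algebra_simps)
  also have "\<dots> \<le> (card A choose card M) * fact (card A - card M) * fact (card M)"
    using \<open>card M * num_linexts R M \<le> fact (card M)\<close> by (rule mult_le_mono2)
  also have "\<dots> = fact (card A)"
    using binomial_fact_lemma[of "card M" "card A"] card_mono[OF assms M(1)]
    by (simp add: algebra_simps)
  finally show ?thesis unfolding M_def .
qed

lemma num_linexts_pad_nonisolated: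
  assumes "finite A" and "card {z\<in>A. neighbours R A z \<noteq> {}} \<le> r" and "r \<le> card A"
  obtains S where "S \<subseteq> A" and "card S = r"
    and "num_linexts R A = (card A choose r) * num_linexts R S * fact (card A - r)"
proof -
  define M where "M = {z\<in>A. neighbours R A z \<noteq> {}}"
  have M: "M \<subseteq> A" "finite M" using assms(1) by (auto simp: M_def)
  have "r - card M \<le> card (A - M)"
    using card_Diff_subset[OF M(2,1)] assms(2,3) unfolding M_def by simp
  then obtain T where T: "T \<subseteq> A - M" "card T = r - card M"
    by (rule obtain_subset_with_card_n)
  define S where "S = M \<union> T"
  have S: "S \<subseteq> A" using M(1) T(1) by (auto simp: S_def)
  have card_S: "card S = r"
    using card_Un_disjoint[OF M(2), of T] T assms(1,2) finite_subset[OF _ assms(1)]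
    unfolding S_def M_def by auto
  have "a \<in> S \<and> b \<in> S" if "(a, b) \<in> R" "a \<in> A" "b \<in> A" "a \<noteq> b" for a b
    using related_in_nonisolated[OF that] unfolding S_def M_def by blast
  then have "num_linexts R A = (card A choose card S) * num_linexts R S * fact (card A - card S)"
    by (rule num_linexts_isolated_outside[OF assms(1) S])
  then show ?thesis using that S card_S by blast
qed

lemma LE_factor_if_large:
  assumes "x \<in> LE n" and "r \<le> n" and "fact n < (r + 1) * x"
  shows "\<exists>l\<in>LE r. x = (n choose r) * fact (n - r) * l"
proof -
  obtain P where P: "is_poset {0..<n} P" "x = ext {0..<n} P"
    using assms(1) by (auto simp: LE_def)
  have order: "partial_order_on {0..<n} P" and P_sub: "P \<subseteq> {0..<n} \<times> {0..<n}"
    using P(1) by (auto simp: is_poset_def)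
  have x: "x = num_linexts P {0..<n}"
    using P(2) ext_eq_num_linexts[OF _ P_sub] by simp
  let ?m = "card {z\<in>{0..<n}. neighbours P {0..<n} z \<noteq> {}}"
  have "?m * x \<le> fact n"
    using card_nonisolated_mult_num_linexts_le_fact[of "{0..<n}" P] x by simp
  then have "?m \<le> r"
    using assms(3) mult_le_mono1[of "r + 1" ?m x] by (cases "r + 1 \<le> ?m") auto
  then obtain S where S: "S \<subseteq> {0..<n}" "card S = r"
    and x_eq: "x = (n choose r) * num_linexts P S * fact (n - r)"
    using num_linexts_pad_nonisolated[of "{0..<n}" P r] assms(2) x by auto
  have "num_linexts P S \<in> LE r"
    using num_linexts_in_LE[OF order S(1)] S finite_subset by fastforce
  then show ?thesis using x_eq by (auto simp: algebra_simps)
qed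

lemma partial_order_on_Un_Id_on:
  assumes "partial_order_on S Q" and "S \<subseteq> A"
  shows "partial_order_on A (Q \<union> Id_on A)"
  using assms unfolding order_on_defs refl_on_def trans_def antisym_def by blast

lemma LE_scaled_mem:
  assumes "l \<in> LE r" and "r \<le> n"
  shows "(n choose r) * fact (n - r) * l \<in> LE n"
proof -
  obtain Q where Q: "is_poset {0..<r} Q" "l = ext {0..<r} Q"
    using assms(1) by (auto simp: LE_def)
  have Q_order: "partial_order_on {0..<r} Q" and Q_sub: "Q \<subseteq> {0..<r} \<times> {0..<r}"
    using Q(1) by (auto simp: is_poset_def)
  define P where "P = Q \<union> Id_on {0..<n}"
  have P_poset: "is_poset {0..<n} P"
    using partial_order_on_Un_Id_on[OF Q_order] assms(2) Q_sub by (auto simp: is_poset_def P_def)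
  have "a \<in> {0..<r} \<and> b \<in> {0..<r}"
    if "(a, b) \<in> P" "a \<in> {0..<n}" "b \<in> {0..<n}" "a \<noteq> b" for a b
    using that Q_sub by (auto simp: P_def)
  then have "num_linexts P {0..<n} = (n choose r) * num_linexts P {0..<r} * fact (n - r)"
    using num_linexts_isolated_outside[of "{0..<n}" "{0..<r}" P] assms(2) by simp
  moreover have "num_linexts P {0..<r} = num_linexts Q {0..<r}"
    using Q_order by (intro num_linexts_cong) (auto simp: P_def order_on_defs refl_on_def)
  moreover have "ext {0..<n} P = num_linexts P {0..<n}"
    using P_poset by (intro ext_eq_num_linexts) (auto simp: is_poset_def)
  moreover have "l = num_linexts Q {0..<r}"
    using Q(2) ext_eq_num_linexts[OF _ Q_sub] by simp
  ultimately have "ext {0..<n} P = (n choose r) * fact (n - r) * l" by simp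
  then show ?thesis using P_poset unfolding LE_def by force
qed

lemma real_div_less_iff:
  assumes "0 < c"
  shows "real a / real c < real b \<longleftrightarrow> a < c * b"
proof -
  have "real a / real c < real b \<longleftrightarrow> real a < real c * real b"
    using assms by (simp add: divide_less_eq mult.commute)
  also have "\<dots> \<longleftrightarrow> a < c * b"
    by (metis of_nat_less_iff of_nat_mult)
  finally show ?thesis .
qed

lemma LE_large_eq_scaled:
  assumes "r \<le> n"
  shows "{x \<in> LE n. fact n < (r + 1) * x \<and> x \<le> fact n}
       = {(n choose r) * fact (n - r) * l | l. l \<in> LE r \<and> fact r < (r + 1) * l \<and> l \<le> fact r}"
proof -
  define K :: nat where "K = (n choose r) * fact (n - r)"
  have "fact n = K * fact r"
    using binomial_fact_lemma[of r n] assms by (simp add: K_def algebra_simps)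
  moreover from this have "0 < K" by (metis fact_nonzero gr0I mult_zero_left)
  ultimately have scaled: "fact n < (r + 1) * (K * l) \<longleftrightarrow> fact r < (r + 1) * l"
      "K * l \<le> fact n \<longleftrightarrow> l \<le> fact r" for l
    unfolding mult.left_commute[of "r + 1" K] by simp_all
  show ?thesis
    unfolding K_def[symmetric]
  proof (intro equalityI subsetI)
    fix x assume "x \<in> {x \<in> LE n. fact n < (r + 1) * x \<and> x \<le> fact n}"
    then obtain l where "l \<in> LE r" "x = K * l" "fact n < (r + 1) * x" "x \<le> fact n"
      using LE_factor_if_large[of x n r] assms by (auto simp: K_def)
    then show "x \<in> {K * l | l. l \<in> LE r \<and> fact r < (r + 1) * l \<and> l \<le> fact r}"
      using scaled by auto
  next
    fix x assume "x \<in> {K * l | l. l \<in> LE r \<and> fact r < (r + 1) * l \<and> l \<le> fact r}"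
    then obtain l where "l \<in> LE r" "x = K * l" "fact r < (r + 1) * l" "l \<le> fact r"
      by blast
    then show "x \<in> {x \<in> LE n. fact n < (r + 1) * x \<and> x \<le> fact n}"
      using LE_scaled_mem[of l r n] assms scaled by (auto simp: K_def)
  qed
qed

theorem theorem6p3:
  fixes r n :: nat
  assumes "1 \<le> r" and "r < n"
  shows "{x \<in> LE n. real (fact n) / real (r + 1) < real x \<and> x \<le> fact n}
       = {(fact n div fact r) * l | l. l \<in> LE r \<and>
            real (fact r) / real (r + 1) < real l \<and> l \<le> fact r}"
proof -
  have less_iff: "real a / real (r + 1) < real b \<longleftrightarrow> a < (r + 1) * b" for a b
    by (rule real_div_less_iff) simp
  have "fact n = fact r * ((n choose r) * fact (n - r))"
    using binomial_fact_lemma[of r n] assms(2) by (simp add: algebra_simps)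
  then have "fact n div fact r = (n choose r) * fact (n - r)"
    by simp
  then show ?thesis
    unfolding less_iff using LE_large_eq_scaled[of r n] assms(2) by simp
qed

end
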